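(* Let the setting be as in the context, and assume in addition that $\Xi$ is 2-regular and that $m$ is a bicharacter with $m(x,y)=\overline{m(y,x)}$ for all $x,y\in\Xi$. Then for every $A\in\mathcal T^1(\mathcal H)$ and all $x,\xi\in\Xi$: $\mathcal F_U(U_{x/2}AU_{x/2})(\xi)=\mathcal F_U(A)(\xi-x)$.
   Context: $\Xi$ is a locally compact abelian group; $m:\Xi\times\Xi\to S^1$ separately continuous with $m(x+y,z)m(x,y)=m(x,y+z)m(y,z)$, $m(x,0)=m(0,x)=1$, $m(x,y)=m(-x,-y)$, Heisenberg ($x\mapsto\sigma(x,\cdot)$ with $\sigma(x,y)=m(x,y)/m(y,x)$ a topological isomorphism $\Xi\to\widehat\Xi$; $\widehat\Xi$ identified with $\Xi$). $(U_x)$ is the irreducible strongly continuous square integrable projective unitary representation on $\mathcal H$ with $U_xU_y=m(x,y)U_{x+y}$. $\Xi$ is 2-regular if $g\mapsto 2g$ is a topological automorphism of $\Xi$; $x/2$ denotes the preimage of $x$. $\mathcal F_U(A)(\xi)=\operatorname{tr}(AU_\xi^* )$. *)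

theory Defs
  imports "HOL-Analysis.Analysis"
begin

section \<open>The Hilbert space, modelled as l2 over an arbitrary index type 'i\<close>

definition l2 :: "('i \<Rightarrow> complex) set" where
  "l2 = {f. (\<lambda>i. (cmod (f i))^2) summable_on UNIV}"

definition l2inner :: "('i \<Rightarrow> complex) \<Rightarrow> ('i \<Rightarrow> complex) \<Rightarrow> complex" where
  "l2inner f g = (\<Sum>\<^sub>\<infinity>i. f i * cnj (g i))"

definition l2norm :: "('i \<Rightarrow> complex) \<Rightarrow> real" where
  "l2norm f = sqrt (\<Sum>\<^sub>\<infinity>i. (cmod (f i))^2)"

definition delta :: "'i \<Rightarrow> ('i \<Rightarrow> complex)" where
  "delta i = (\<lambda>j. if j = i then 1 else 0)"

definition l2_closed_subspace :: "('i \<Rightarrow> complex) set \<Rightarrow> bool" where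
  "l2_closed_subspace V \<longleftrightarrow> V \<subseteq> l2 \<and> (\<lambda>_. 0) \<in> V \<and>
     (\<forall>f\<in>V. \<forall>g\<in>V. (\<lambda>i. f i + g i) \<in> V) \<and> (\<forall>c. \<forall>f\<in>V. (\<lambda>i. c * f i) \<in> V) \<and>
     (\<forall>s f. (\<forall>n. s n \<in> V) \<longrightarrow> f \<in> l2 \<longrightarrow> (\<lambda>n. l2norm (\<lambda>i. s n i - f i)) \<longlonglongrightarrow> 0 \<longrightarrow> f \<in> V)"

definition bounded_op :: "(('i \<Rightarrow> complex) \<Rightarrow> ('i \<Rightarrow> complex)) \<Rightarrow> bool" where
  "bounded_op A \<longleftrightarrow> (\<forall>f\<in>l2. A f \<in> l2) \<and>
     (\<forall>f\<in>l2. \<forall>g\<in>l2. A (\<lambda>i. f i + g i) = (\<lambda>i. A f i + A g i)) \<and>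
     (\<forall>c. \<forall>f\<in>l2. A (\<lambda>i. c * f i) = (\<lambda>i. c * A f i)) \<and>
     (\<exists>C. \<forall>f\<in>l2. l2norm (A f) \<le> C * l2norm f)"

definition unitary_op :: "(('i \<Rightarrow> complex) \<Rightarrow> ('i \<Rightarrow> complex)) \<Rightarrow> bool" where
  "unitary_op U \<longleftrightarrow> bounded_op U \<and> U ` l2 = l2 \<and>
     (\<forall>f\<in>l2. \<forall>g\<in>l2. l2inner (U f) (U g) = l2inner f g)"

definition adj :: "(('i \<Rightarrow> complex) \<Rightarrow> ('i \<Rightarrow> complex)) \<Rightarrow> ('i \<Rightarrow> complex) \<Rightarrow> ('i \<Rightarrow> complex)" where
  "adj A = (\<lambda>g i. l2inner g (A (delta i)))"

definition orthonormal_fam :: "nat \<Rightarrow> (nat \<Rightarrow> ('i \<Rightarrow> complex)) \<Rightarrow> bool" where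
  "orthonormal_fam n e \<longleftrightarrow> (\<forall>k<n. e k \<in> l2) \<and>
     (\<forall>k<n. \<forall>l<n. l2inner (e k) (e l) = (if k = l then 1 else 0))"

definition trace_class :: "(('i \<Rightarrow> complex) \<Rightarrow> ('i \<Rightarrow> complex)) \<Rightarrow> bool" where
  "trace_class A \<longleftrightarrow> bounded_op A \<and>
     (\<exists>C. \<forall>n e f. orthonormal_fam n e \<longrightarrow> orthonormal_fam n f \<longrightarrow>
        (\<Sum>k<n. cmod (l2inner (A (e k)) (f k))) \<le> C)"

definition trace :: "(('i \<Rightarrow> complex) \<Rightarrow> ('i \<Rightarrow> complex)) \<Rightarrow> complex" where
  "trace T = (\<Sum>\<^sub>\<infinity>i. T (delta i) i)"

definition FU :: "('x \<Rightarrow> ('i \<Rightarrow> complex) \<Rightarrow> ('i \<Rightarrow> complex)) \<Rightarrow>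
    (('i \<Rightarrow> complex) \<Rightarrow> ('i \<Rightarrow> complex)) \<Rightarrow> 'x \<Rightarrow> complex" where
  "FU U A \<xi> = trace (\<lambda>f. A (adj (U \<xi>) f))"

definition multiplier :: "('x::topological_ab_group_add \<Rightarrow> 'x \<Rightarrow> complex) \<Rightarrow> bool" where
  "multiplier m \<longleftrightarrow> (\<forall>x y. cmod (m x y) = 1) \<and>
     (\<forall>y. continuous_on UNIV (\<lambda>x. m x y)) \<and> (\<forall>x. continuous_on UNIV (m x)) \<and>
     (\<forall>x y z. m (x + y) z * m x y = m x (y + z) * m y z) \<and>
     (\<forall>x. m x 0 = 1 \<and> m 0 x = 1) \<and>
     (\<forall>x y. m x y = m (- x) (- y))"

definition continuous_character :: "('x::topological_ab_group_add \<Rightarrow> complex) \<Rightarrow> bool" where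
  "continuous_character ch \<longleftrightarrow> continuous_on UNIV ch \<and> (\<forall>a. cmod (ch a) = 1) \<and>
     (\<forall>a b. ch (a + b) = ch a * ch b)"

definition symp :: "('x \<Rightarrow> 'x \<Rightarrow> complex) \<Rightarrow> 'x \<Rightarrow> 'x \<Rightarrow> complex" where
  "symp m x y = m x y / m y x"

text \<open>Heisenberg: x \<mapsto> sigma(x,.) is a bijection onto the continuous characters and a
  homeomorphism, the dual group carrying the compact-open topology (= topology of
  uniform convergence on compact sets), expressed via convergence of filters.\<close>
definition heisenberg :: "('x::{topological_ab_group_add,t2_space} \<Rightarrow> 'x \<Rightarrow> complex) \<Rightarrow> bool" where
  "heisenberg m \<longleftrightarrow> (\<forall>x. continuous_character (symp m x)) \<and>
     (\<forall>ch. continuous_character ch \<longrightarrow> (\<exists>!x. symp m x = ch)) \<and>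
     (\<forall>(F::'x filter) x0. F \<le> nhds x0 \<longleftrightarrow>
        (\<forall>K. compact K \<longrightarrow> (\<forall>e>0. eventually (\<lambda>x. \<forall>k\<in>K. dist (symp m x k) (symp m x0 k) < e) F)))"

definition bicharacter :: "('x::ab_group_add \<Rightarrow> 'x \<Rightarrow> complex) \<Rightarrow> bool" where
  "bicharacter m \<longleftrightarrow> (\<forall>x y z. m (x + y) z = m x z * m y z) \<and>
     (\<forall>x y z. m x (y + z) = m x y * m x z)"

definition two_regular :: "'x::topological_ab_group_add itself \<Rightarrow> bool" where
  "two_regular _ \<longleftrightarrow> bij (\<lambda>g::'x. g + g) \<and> continuous_on UNIV (inv (\<lambda>g::'x. g + g))"

definition half :: "'x::ab_group_add \<Rightarrow> 'x" where
  "half x = inv (\<lambda>g. g + g) x"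

definition haar_measure :: "'x::{topological_ab_group_add,t2_space} measure \<Rightarrow> bool" where
  "haar_measure \<mu> \<longleftrightarrow> sets \<mu> = sets borel \<and>
     (\<forall>a A. A \<in> sets borel \<longrightarrow> emeasure \<mu> ((\<lambda>y. a + y) ` A) = emeasure \<mu> A) \<and>
     (\<forall>K. compact K \<longrightarrow> emeasure \<mu> K < \<infinity>) \<and>
     (\<exists>U. open U \<and> emeasure \<mu> U > 0) \<and>
     (\<forall>A. A \<in> sets borel \<longrightarrow> emeasure \<mu> A = (INF U\<in>{U. open U \<and> A \<subseteq> U}. emeasure \<mu> U)) \<and>
     (\<forall>U. open U \<longrightarrow> emeasure \<mu> U = (SUP K\<in>{K. compact K \<and> K \<subseteq> U}. emeasure \<mu> K))"

definition proj_rep :: "('x::ab_group_add \<Rightarrow> 'x \<Rightarrow> complex) \<Rightarrow>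
    ('x \<Rightarrow> ('i \<Rightarrow> complex) \<Rightarrow> ('i \<Rightarrow> complex)) \<Rightarrow> bool" where
  "proj_rep m U \<longleftrightarrow> (\<forall>x. unitary_op (U x)) \<and>
     (\<forall>x y. \<forall>f\<in>l2. U x (U y f) = (\<lambda>i. m x y * U (x + y) f i))"

definition strongly_continuous :: "('x::topological_space \<Rightarrow> ('i \<Rightarrow> complex) \<Rightarrow> ('i \<Rightarrow> complex)) \<Rightarrow> bool" where
  "strongly_continuous U \<longleftrightarrow>
     (\<forall>f\<in>l2. \<forall>x0. ((\<lambda>x. l2norm (\<lambda>i. U x f i - U x0 f i)) \<longlongrightarrow> 0) (at x0))"

definition irreducible_rep :: "('x \<Rightarrow> ('i \<Rightarrow> complex) \<Rightarrow> ('i \<Rightarrow> complex)) \<Rightarrow> bool" where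
  "irreducible_rep U \<longleftrightarrow> (\<forall>V. l2_closed_subspace V \<longrightarrow> (\<forall>x. \<forall>f\<in>V. U x f \<in> V) \<longrightarrow>
     V = {\<lambda>_. 0} \<or> V = l2)"

definition square_integrable :: "('x::{topological_ab_group_add,t2_space} \<Rightarrow> ('i \<Rightarrow> complex) \<Rightarrow> ('i \<Rightarrow> complex)) \<Rightarrow> bool" where
  "square_integrable U \<longleftrightarrow> (\<exists>\<mu>. haar_measure \<mu> \<and>
     (\<exists>u\<in>l2. \<exists>v\<in>l2. u \<noteq> (\<lambda>_. 0) \<and> v \<noteq> (\<lambda>_. 0) \<and>
        (\<integral>\<^sup>+x. ennreal ((cmod (l2inner (U x u) v))^2) \<partial>\<mu>) < \<infinity>))"

end

theory Submission
  imports Defs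
begin

(* Put a = x/2 and W = U_{-a}. As m is an antisymmetric bicharacter and Xi is 2-regular,
   m(a, a) = 1, so W is the inverse of U_a and U_a U_{-xi} = U_{x - xi} W. Hence
   U_a A U_a U_xi^* equals W^{-1} X W with X = A U_{xi - x}^*, and the claim is the unitary
   invariance of the trace.

   The trace is defined in the standard basis, so unitary invariance amounts to basis
   independence of sum_i <X c_i, c_i>. This holds as soon as the diagonal sums of X over finite
   orthonormal families are bounded: a finite family g nearly attaining their supremum can be
   made part of any orthonormal basis by phase changes and reflections, which preserve the
   diagonal sum, and the diagonal terms off g then contribute at most epsilon. *)

section \<open>The sequence space l2\<close>

lemma mult_le_weighted_squares:
  fixes a b t :: real
  assumes "t > 0"
  shows "a * b \<le> t / 2 * a\<^sup>2 + 1 / (2 * t) * b\<^sup>2"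
proof -
  have "0 \<le> (t * a - b)\<^sup>2 / (2 * t)"
    using assms by simp
  also have "\<dots> = t / 2 * a\<^sup>2 + 1 / (2 * t) * b\<^sup>2 - a * b"
    using assms by (simp add: power2_diff field_simps power2_eq_square)
  finally show ?thesis
    by simp
qed

lemma norm_add_squared_le:
  fixes a b :: "'a::real_normed_vector"
  shows "(norm (a + b))\<^sup>2 \<le> 2 * (norm a)\<^sup>2 + 2 * (norm b)\<^sup>2"
proof -
  have "(norm (a + b))\<^sup>2 \<le> (norm a + norm b)\<^sup>2"
    by (simp add: norm_triangle_ineq power_mono)
  also have "\<dots> \<le> 2 * (norm a)\<^sup>2 + 2 * (norm b)\<^sup>2"
    using sum_squares_bound[of "norm a" "norm b"] by (simp add: power2_sum)
  finally show ?thesis .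
qed

lemma l2_summable: "f \<in> l2 \<Longrightarrow> (\<lambda>i. (cmod (f i))\<^sup>2) summable_on UNIV"
  by (simp add: l2_def)

lemma l2_add:
  assumes "f \<in> l2" "g \<in> l2"
  shows "(\<lambda>i. f i + g i) \<in> l2"
proof -
  have "(\<lambda>i. 2 * (cmod (f i))\<^sup>2 + 2 * (cmod (g i))\<^sup>2) summable_on UNIV"
    using assms by (intro summable_on_add summable_on_cmult_right l2_summable)
  then show ?thesis
    unfolding l2_def mem_Collect_eq
    by (rule summable_on_comparison_test) (auto simp: norm_add_squared_le)
qed

lemma l2_scale:
  assumes "f \<in> l2"
  shows "(\<lambda>i. c * f i) \<in> l2"
proof -
  have "(\<lambda>i. (cmod c)\<^sup>2 * (cmod (f i))\<^sup>2) summable_on UNIV"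
    using assms by (intro summable_on_cmult_right l2_summable)
  then show ?thesis
    unfolding l2_def by (simp add: norm_mult power_mult_distrib)
qed

lemma l2_diff:
  assumes "f \<in> l2" "g \<in> l2"
  shows "(\<lambda>i. f i - g i) \<in> l2"
  using l2_add[OF assms(1) l2_scale[OF assms(2), of "-1"]] by simp

lemma l2_zero: "(\<lambda>i. 0) \<in> l2"
  by (simp add: l2_def)

lemma l2_sum:
  assumes "finite F" "\<And>k. k \<in> F \<Longrightarrow> c k \<in> l2"
  shows "(\<lambda>t. \<Sum>k\<in>F. a k * c k t) \<in> l2"
  using assms
proof (induction F rule: finite_induct)
  case empty
  then show ?case
    by (simp add: l2_zero)
next
  case (insert k F)
  then have "(\<lambda>t. a k * c k t + (\<Sum>k\<in>F. a k * c k t)) \<in> l2"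
    by (intro l2_add l2_scale) auto
  with insert show ?case
    by simp
qed

lemma delta_l2: "delta i \<in> l2"
  unfolding l2_def by (simp, rule finite_nonzero_values_imp_summable_on) (simp add: delta_def)

lemma l2inner_abs_summable:
  assumes "f \<in> l2" "g \<in> l2"
  shows "(\<lambda>i. norm (f i * cnj (g i))) summable_on UNIV"
proof (rule Infinite_Sum.abs_summable_on_comparison_test')
  show "(\<lambda>i. (cmod (f i))\<^sup>2 + (cmod (g i))\<^sup>2) summable_on UNIV"
    using assms by (intro summable_on_add l2_summable)
  show "norm (f i * cnj (g i)) \<le> (cmod (f i))\<^sup>2 + (cmod (g i))\<^sup>2" for i
  proof -
    have "norm (f i * cnj (g i)) = cmod (f i) * cmod (g i)"
      by (simp add: norm_mult)
    moreover have "0 \<le> cmod (f i) * cmod (g i)"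
      by simp
    ultimately show ?thesis
      using sum_squares_bound[of "cmod (f i)" "cmod (g i)"] by linarith
  qed
qed

lemma l2inner_summable: "f \<in> l2 \<Longrightarrow> g \<in> l2 \<Longrightarrow> (\<lambda>i. f i * cnj (g i)) summable_on UNIV"
  by (rule abs_summable_summable, rule l2inner_abs_summable)

lemma l2inner_has_sum:
  "f \<in> l2 \<Longrightarrow> g \<in> l2 \<Longrightarrow> ((\<lambda>i. f i * cnj (g i)) has_sum l2inner f g) UNIV"
  unfolding l2inner_def by (rule has_sum_infsum, rule l2inner_summable)

lemma l2inner_cnj [simp]: "cnj (l2inner f g) = l2inner g f"
  unfolding l2inner_def by (subst infsum_cnj[symmetric]) (simp add: mult.commute)

lemma l2inner_add_left:
  assumes "f \<in> l2" "g \<in> l2" "h \<in> l2"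
  shows "l2inner (\<lambda>i. f i + g i) h = l2inner f h + l2inner g h"
  unfolding l2inner_def using assms
  by (simp add: distrib_right infsum_add l2inner_summable)

lemma l2inner_scale_left: "l2inner (\<lambda>i. c * f i) h = c * l2inner f h"
  unfolding l2inner_def by (simp add: mult.assoc infsum_cmult_right')

lemma l2inner_scale_right: "l2inner h (\<lambda>i. c * f i) = cnj c * l2inner h f"
  using arg_cong[OF l2inner_scale_left[of c f h], of cnj] by simp

lemma l2inner_diff_left:
  assumes "f \<in> l2" "g \<in> l2" "h \<in> l2"
  shows "l2inner (\<lambda>i. f i - g i) h = l2inner f h - l2inner g h"
proof -
  have "l2inner (\<lambda>i. f i + (-1) * g i) h = l2inner f h + (-1) * l2inner g h"
    using assms by (simp only: l2inner_add_left l2_scale l2inner_scale_left)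
  then show ?thesis
    by simp
qed

lemma l2inner_diff_right:
  assumes "f \<in> l2" "g \<in> l2" "h \<in> l2"
  shows "l2inner h (\<lambda>i. f i - g i) = l2inner h f - l2inner h g"
  using arg_cong[OF l2inner_diff_left[OF assms], of cnj] by simp

lemma l2inner_delta_right: "l2inner f (delta i) = f i"
  unfolding l2inner_def
  by (rule infsumI, rule has_sum_finite_neutralI[of "{i}"]) (auto simp: delta_def)

lemma l2inner_delta_left: "l2inner (delta i) f = cnj (f i)"
  by (metis l2inner_cnj l2inner_delta_right)

lemma l2norm_nonneg: "l2norm f \<ge> 0"
  unfolding l2norm_def by (auto intro: infsum_nonneg)

lemma l2norm_squared: "(l2norm f)\<^sup>2 = (\<Sum>\<^sub>\<infinity>i. (cmod (f i))\<^sup>2)"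
  unfolding l2norm_def by (simp add: infsum_nonneg)

lemma l2inner_self:
  assumes "f \<in> l2"
  shows "l2inner f f = of_real ((l2norm f)\<^sup>2)"
proof -
  have "((\<lambda>i. of_real ((cmod (f i))\<^sup>2) :: complex) has_sum of_real ((l2norm f)\<^sup>2)) UNIV"
    unfolding l2norm_squared using assms by (intro has_sum_of_real has_sum_infsum l2_summable)
  then show ?thesis
    unfolding l2inner_def complex_norm_square by (simp add: infsumI)
qed

lemma l2norm_eq_sqrt_l2inner: "f \<in> l2 \<Longrightarrow> l2norm f = sqrt (cmod (l2inner f f))"
  by (simp add: l2inner_self norm_power l2norm_nonneg)

lemma l2inner_self_eq_0:
  assumes "f \<in> l2" "l2inner f f = 0"
  shows "f = (\<lambda>i. 0)"
proof
  fix i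
  have "(\<Sum>\<^sub>\<infinity>i. (cmod (f i))\<^sup>2) = 0"
    using assms by (simp add: l2inner_self flip: l2norm_squared)
  then have "(cmod (f i))\<^sup>2 = 0"
    using assms(1) by (intro nonneg_infsum_le_0D[where A = UNIV]) (auto simp: l2_summable)
  then show "f i = 0"
    by simp
qed

lemma l2inner_norm_le_weighted:
  assumes "f \<in> l2" "g \<in> l2" "t > 0"
  shows "cmod (l2inner f g) \<le> t / 2 * (l2norm f)\<^sup>2 + 1 / (2 * t) * (l2norm g)\<^sup>2"
proof -
  have "cmod (l2inner f g) \<le> (\<Sum>\<^sub>\<infinity>i. norm (f i * cnj (g i)))"
    unfolding l2inner_def by (intro norm_infsum_bound l2inner_abs_summable assms(1,2))
  also have "\<dots> \<le> (\<Sum>\<^sub>\<infinity>i. t / 2 * (cmod (f i))\<^sup>2 + 1 / (2 * t) * (cmod (g i))\<^sup>2)"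
  proof (rule infsum_mono)
    show "(\<lambda>i. norm (f i * cnj (g i))) summable_on UNIV"
      using assms(1,2) by (rule l2inner_abs_summable)
    show "(\<lambda>i. t / 2 * (cmod (f i))\<^sup>2 + 1 / (2 * t) * (cmod (g i))\<^sup>2) summable_on UNIV"
      using assms by (intro summable_on_add summable_on_cmult_right l2_summable)
    show "norm (f i * cnj (g i)) \<le> t / 2 * (cmod (f i))\<^sup>2 + 1 / (2 * t) * (cmod (g i))\<^sup>2" for i
      using mult_le_weighted_squares[OF assms(3)] by (simp add: norm_mult)
  qed
  also have "\<dots> = (\<Sum>\<^sub>\<infinity>i. t / 2 * (cmod (f i))\<^sup>2) + (\<Sum>\<^sub>\<infinity>i. 1 / (2 * t) * (cmod (g i))\<^sup>2)"
    using assms by (intro infsum_add summable_on_cmult_right l2_summable)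
  also have "\<dots> = t / 2 * (l2norm f)\<^sup>2 + 1 / (2 * t) * (l2norm g)\<^sup>2"
    unfolding l2norm_squared by (simp only: infsum_cmult_right')
  finally show ?thesis .
qed

lemma cauchy_schwarz:
  assumes "f \<in> l2" "g \<in> l2"
  shows "cmod (l2inner f g) \<le> l2norm f * l2norm g"
proof (cases "l2norm f = 0 \<or> l2norm g = 0")
  case True
  then have "f = (\<lambda>i. 0) \<or> g = (\<lambda>i. 0)"
    using assms l2inner_self l2inner_self_eq_0 by fastforce
  then show ?thesis
    by (auto simp: l2inner_def l2norm_nonneg)
next
  case False
  then have pos: "l2norm f > 0" "l2norm g > 0"
    using l2norm_nonneg[of f] l2norm_nonneg[of g] by auto
  have "cmod (l2inner f g) \<le> (l2norm g / l2norm f) / 2 * (l2norm f)\<^sup>2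
      + 1 / (2 * (l2norm g / l2norm f)) * (l2norm g)\<^sup>2"
    using pos by (intro l2inner_norm_le_weighted assms) simp
  also have "\<dots> = l2norm f * l2norm g"
    using pos by (simp add: field_simps power2_eq_square)
  finally show ?thesis .
qed


section \<open>Bounded and unitary operators\<close>

lemma bounded_op_l2: "bounded_op X \<Longrightarrow> f \<in> l2 \<Longrightarrow> X f \<in> l2"
  by (simp add: bounded_op_def)

lemma bounded_op_add:
  "bounded_op X \<Longrightarrow> f \<in> l2 \<Longrightarrow> g \<in> l2 \<Longrightarrow> X (\<lambda>i. f i + g i) = (\<lambda>i. X f i + X g i)"
  by (simp add: bounded_op_def)

lemma bounded_op_scale: "bounded_op X \<Longrightarrow> f \<in> l2 \<Longrightarrow> X (\<lambda>i. c * f i) = (\<lambda>i. c * X f i)"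
  by (simp add: bounded_op_def)

lemma bounded_op_diff:
  assumes "bounded_op X" "f \<in> l2" "g \<in> l2"
  shows "X (\<lambda>i. f i - g i) = (\<lambda>i. X f i - X g i)"
  using bounded_op_add[OF assms(1,2) l2_scale[OF assms(3), of "-1"]]
    bounded_op_scale[OF assms(1,3), of "-1"]
  by simp

lemma bounded_op_sum:
  assumes X: "bounded_op X" and "finite F" "\<And>k. k \<in> F \<Longrightarrow> c k \<in> l2"
  shows "X (\<lambda>t. \<Sum>k\<in>F. a k * c k t) = (\<lambda>t. \<Sum>k\<in>F. a k * X (c k) t)"
  using assms(2,3)
proof (induction F rule: finite_induct)
  case empty
  show ?case
    using bounded_op_scale[OF X l2_zero, of 0] by simp
next
  case (insert k F)
  have "X (\<lambda>t. \<Sum>k\<in>insert k F. a k * c k t) = X (\<lambda>t. a k * c k t + (\<Sum>k\<in>F. a k * c k t))"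
    using insert by simp
  also have "\<dots> = (\<lambda>t. X (\<lambda>t. a k * c k t) t + X (\<lambda>t. \<Sum>k\<in>F. a k * c k t) t)"
    using insert by (intro bounded_op_add[OF X] l2_scale l2_sum) auto
  also have "\<dots> = (\<lambda>t. \<Sum>k\<in>insert k F. a k * X (c k) t)"
    using insert by (simp add: bounded_op_scale[OF X])
  finally show ?case .
qed

lemma bounded_op_comp:
  assumes A: "bounded_op A" and B: "bounded_op B"
  shows "bounded_op (\<lambda>f. A (B f))"
  unfolding bounded_op_def
proof (intro conjI ballI allI)
  show "A (B f) \<in> l2" if "f \<in> l2" for f
    using A B that by (simp add: bounded_op_l2)
  show "A (B (\<lambda>i. f i + g i)) = (\<lambda>i. A (B f) i + A (B g) i)" if "f \<in> l2" "g \<in> l2" for f g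
    using A B that by (simp add: bounded_op_add bounded_op_l2)
  show "A (B (\<lambda>i. c * f i)) = (\<lambda>i. c * A (B f) i)" if "f \<in> l2" for c f
    using A B that by (simp add: bounded_op_scale bounded_op_l2)
next
  obtain CA where CA: "\<forall>f\<in>l2. l2norm (A f) \<le> CA * l2norm f"
    using A by (auto simp: bounded_op_def)
  obtain CB where CB: "\<forall>f\<in>l2. l2norm (B f) \<le> CB * l2norm f"
    using B by (auto simp: bounded_op_def)
  have "l2norm (A (B f)) \<le> (max CA 0 * CB) * l2norm f" if f: "f \<in> l2" for f
  proof -
    have "l2norm (A (B f)) \<le> CA * l2norm (B f)"
      using CA B f by (simp add: bounded_op_l2)
    also have "\<dots> \<le> max CA 0 * l2norm (B f)"
      by (intro mult_right_mono) (auto simp: l2norm_nonneg)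
    also have "\<dots> \<le> max CA 0 * (CB * l2norm f)"
      using CB f by (intro mult_left_mono) auto
    finally show ?thesis
      by simp
  qed
  then show "\<exists>C. \<forall>f\<in>l2. l2norm (A (B f)) \<le> C * l2norm f"
    by blast
qed

lemma unitary_op_l2: "unitary_op W \<Longrightarrow> f \<in> l2 \<Longrightarrow> W f \<in> l2"
  by (simp add: unitary_op_def bounded_op_def)

lemma unitary_op_inner:
  "unitary_op W \<Longrightarrow> f \<in> l2 \<Longrightarrow> g \<in> l2 \<Longrightarrow> l2inner (W f) (W g) = l2inner f g"
  by (simp add: unitary_op_def)

lemma l2inner_sum_left:
  assumes "finite F" "\<And>k. k \<in> F \<Longrightarrow> c k \<in> l2" "w \<in> l2"
  shows "l2inner (\<lambda>t. \<Sum>k\<in>F. a k * c k t) w = (\<Sum>k\<in>F. a k * l2inner (c k) w)"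
  using assms(1,2)
proof (induction F rule: finite_induct)
  case empty
  show ?case
    by (simp add: l2inner_def)
next
  case (insert k F)
  have "l2inner (\<lambda>t. \<Sum>k\<in>insert k F. a k * c k t) w
      = l2inner (\<lambda>t. a k * c k t + (\<Sum>k\<in>F. a k * c k t)) w"
    using insert by simp
  also have "\<dots> = l2inner (\<lambda>t. a k * c k t) w + l2inner (\<lambda>t. \<Sum>k\<in>F. a k * c k t) w"
    using insert assms(3) by (intro l2inner_add_left l2_scale l2_sum) auto
  also have "\<dots> = (\<Sum>k\<in>insert k F. a k * l2inner (c k) w)"
    using insert by (simp add: l2inner_scale_left)
  finally show ?case .
qed

lemma l2inner_sum_right:
  assumes "finite F" "\<And>k. k \<in> F \<Longrightarrow> c k \<in> l2" "w \<in> l2"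
  shows "l2inner w (\<lambda>t. \<Sum>k\<in>F. a k * c k t) = (\<Sum>k\<in>F. cnj (a k) * l2inner w (c k))"
proof -
  have "l2inner w (\<lambda>t. \<Sum>k\<in>F. a k * c k t) = cnj (l2inner (\<lambda>t. \<Sum>k\<in>F. a k * c k t) w)"
    by simp
  also have "\<dots> = (\<Sum>k\<in>F. cnj (a k) * l2inner w (c k))"
    by (simp add: l2inner_sum_left[OF assms])
  finally show ?thesis .
qed


section \<open>Orthonormal bases\<close>

definition onb :: "('i \<Rightarrow> ('i \<Rightarrow> complex)) \<Rightarrow> bool" where
  "onb c \<longleftrightarrow> (\<forall>i. c i \<in> l2) \<and> (\<forall>i j. l2inner (c i) (c j) = (if i = j then 1 else 0)) \<and>
     (\<forall>u\<in>l2. \<forall>w\<in>l2. ((\<lambda>i. l2inner u (c i) * l2inner (c i) w) has_sum l2inner u w) UNIV)"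

lemma onb_l2: "onb c \<Longrightarrow> c i \<in> l2"
  by (simp add: onb_def)

lemma onb_orthonormal: "onb c \<Longrightarrow> l2inner (c i) (c j) = (if i = j then 1 else 0)"
  by (simp add: onb_def)

lemma onb_parseval:
  "onb c \<Longrightarrow> u \<in> l2 \<Longrightarrow> w \<in> l2 \<Longrightarrow> ((\<lambda>i. l2inner u (c i) * l2inner (c i) w) has_sum l2inner u w) UNIV"
  by (simp add: onb_def)

lemma onb_delta: "onb delta"
  unfolding onb_def
proof (intro conjI allI ballI)
  show "l2inner (delta i) (delta j) = (if i = j then 1 else 0)" for i j :: 'a
    by (simp add: l2inner_delta_right) (simp add: delta_def)
  show "((\<lambda>i. l2inner u (delta i) * l2inner (delta i) w) has_sum l2inner u w) UNIV"
    if "u \<in> l2" "w \<in> l2" for u w :: "'a \<Rightarrow> complex"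
    using that by (simp add: l2inner_delta_right l2inner_delta_left l2inner_has_sum)
qed (rule delta_l2)

lemma onb_unitary_image:
  assumes W: "unitary_op W" and c: "onb c"
  shows "onb (\<lambda>i. W (c i))"
  unfolding onb_def
proof (intro conjI allI ballI)
  show "W (c i) \<in> l2" for i
    using W onb_l2[OF c] by (rule unitary_op_l2)
  show "l2inner (W (c i)) (W (c j)) = (if i = j then 1 else 0)" for i j
    using unitary_op_inner[OF W onb_l2[OF c] onb_l2[OF c]] onb_orthonormal[OF c] by simp
next
  fix u w :: "'a \<Rightarrow> complex"
  assume "u \<in> l2" "w \<in> l2"
  moreover have "W ` l2 = l2"
    using W by (simp add: unitary_op_def)
  ultimately obtain u' w' where u': "u' \<in> l2" "u = W u'" and w': "w' \<in> l2" "w = W w'"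
    by (metis imageE)
  have "l2inner u (W (c i)) * l2inner (W (c i)) w = l2inner u' (c i) * l2inner (c i) w'" for i
    using u' w' by (simp add: unitary_op_inner[OF W] onb_l2[OF c])
  moreover have "l2inner u w = l2inner u' w'"
    using u' w' by (simp add: unitary_op_inner[OF W])
  ultimately show "((\<lambda>i. l2inner u (W (c i)) * l2inner (W (c i)) w) has_sum l2inner u w) UNIV"
    using onb_parseval[OF c u'(1) w'(1)] by simp
qed

definition partial_expansion ::
    "('i \<Rightarrow> ('i \<Rightarrow> complex)) \<Rightarrow> ('i \<Rightarrow> complex) \<Rightarrow> 'i set \<Rightarrow> ('i \<Rightarrow> complex)" where
  "partial_expansion c v F = (\<lambda>t. \<Sum>k\<in>F. l2inner v (c k) * c k t)"

lemma partial_expansion_l2: "onb c \<Longrightarrow> finite F \<Longrightarrow> partial_expansion c v F \<in> l2"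
  unfolding partial_expansion_def by (simp add: l2_sum onb_l2)

lemma l2inner_basis_partial_expansion:
  assumes c: "onb c" and F: "finite F" "k \<in> F"
  shows "l2inner (c k) (partial_expansion c v F) = l2inner (c k) v"
proof -
  have "l2inner (c k) (partial_expansion c v F) = (\<Sum>j\<in>F. cnj (l2inner v (c j)) * l2inner (c k) (c j))"
    unfolding partial_expansion_def by (rule l2inner_sum_right[OF F(1) onb_l2[OF c] onb_l2[OF c]])
  also have "\<dots> = (\<Sum>j\<in>F. if k = j then l2inner (c k) v else 0)"
    using c by (intro sum.cong) (auto simp: onb_orthonormal)
  finally show ?thesis
    using F by simp
qed

lemma partial_expansion_error:
  assumes c: "onb c" and v: "v \<in> l2" and F: "finite F"
  defines "S \<equiv> partial_expansion c v F"
  shows "l2inner (\<lambda>t. S t - v t) (\<lambda>t. S t - v t)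
    = l2inner v v - (\<Sum>i\<in>F. l2inner v (c i) * l2inner (c i) v)"
proof -
  let ?P = "\<Sum>i\<in>F. l2inner v (c i) * l2inner (c i) v"
  have S: "S \<in> l2"
    unfolding S_def using c F by (rule partial_expansion_l2)
  have Sv: "l2inner S v = ?P"
    unfolding S_def partial_expansion_def by (rule l2inner_sum_left[OF F onb_l2[OF c] v])
  have SS: "l2inner S S = ?P"
  proof -
    have "l2inner S S = (\<Sum>k\<in>F. l2inner v (c k) * l2inner (c k) S)"
      unfolding S_def partial_expansion_def
      by (rule l2inner_sum_left[OF F onb_l2[OF c] S[unfolded S_def partial_expansion_def]])
    also have "\<dots> = ?P"
      unfolding S_def using c F by (intro sum.cong) (simp_all add: l2inner_basis_partial_expansion)
    finally show ?thesis .
  qed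
  have vS: "l2inner v S = ?P"
    using arg_cong[OF Sv, of cnj] by (simp add: mult.commute)
  have "l2inner (\<lambda>t. S t - v t) (\<lambda>t. S t - v t)
      = (l2inner S S - l2inner S v) - (l2inner v S - l2inner v v)"
    using S v by (simp add: l2inner_diff_left l2inner_diff_right l2_diff)
  then show ?thesis
    by (simp add: SS Sv vS)
qed

lemma bounded_op_partial_expansion:
  assumes "onb c" "bounded_op X" "finite F" "w \<in> l2"
  shows "l2inner (X (partial_expansion c v F)) w = (\<Sum>i\<in>F. l2inner v (c i) * l2inner (X (c i)) w)"
  unfolding partial_expansion_def bounded_op_sum[OF assms(2,3) onb_l2[OF assms(1)]]
  by (rule l2inner_sum_left[OF assms(3) bounded_op_l2[OF assms(2) onb_l2[OF assms(1)]] assms(4)])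

lemma bounded_op_l2inner_dist:
  assumes X: "bounded_op X" and C: "\<forall>f\<in>l2. l2norm (X f) \<le> C * l2norm f"
    and u: "u \<in> l2" and v: "v \<in> l2" and w: "w \<in> l2"
  shows "cmod (l2inner (X u) w - l2inner (X v) w) \<le> C * l2norm (\<lambda>t. u t - v t) * l2norm w"
proof -
  have d: "(\<lambda>t. u t - v t) \<in> l2"
    using u v by (rule l2_diff)
  have "l2inner (X u) w - l2inner (X v) w = l2inner (X (\<lambda>t. u t - v t)) w"
    using X u v w by (simp add: bounded_op_diff l2inner_diff_left bounded_op_l2)
  also have "cmod \<dots> \<le> l2norm (X (\<lambda>t. u t - v t)) * l2norm w"
    using X d w by (simp add: cauchy_schwarz bounded_op_l2)
  also have "\<dots> \<le> C * l2norm (\<lambda>t. u t - v t) * l2norm w"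
    using C d by (intro mult_right_mono) (auto simp: l2norm_nonneg)
  finally show ?thesis .
qed

text \<open>The partial expansions converge to \<open>v\<close> in norm by Parseval, and a bounded operator
  preserves this convergence.\<close>

lemma onb_expansion:
  assumes c: "onb c" and X: "bounded_op X" and v: "v \<in> l2" and w: "w \<in> l2"
  shows "((\<lambda>i. l2inner v (c i) * l2inner (X (c i)) w) has_sum l2inner (X v) w) UNIV"
proof -
  define e where "e F = l2inner v v - (\<Sum>i\<in>F. l2inner v (c i) * l2inner (c i) v)" for F
  obtain C where C: "\<forall>f\<in>l2. l2norm (X f) \<le> C * l2norm f"
    using X by (auto simp: bounded_op_def)
  have bound: "cmod ((\<Sum>i\<in>F. l2inner v (c i) * l2inner (X (c i)) w) - l2inner (X v) w)
      \<le> C * sqrt (cmod (e F)) * l2norm w" if F: "finite F" for F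
  proof -
    let ?S = "partial_expansion c v F"
    have S: "?S \<in> l2"
      using c F by (rule partial_expansion_l2)
    have "l2norm (\<lambda>t. ?S t - v t) = sqrt (cmod (e F))"
      using S v c F by (simp add: l2norm_eq_sqrt_l2inner l2_diff partial_expansion_error e_def)
    with bounded_op_l2inner_dist[OF X C S v w] show ?thesis
      using c X F w by (simp add: bounded_op_partial_expansion)
  qed
  have "(e \<longlongrightarrow> 0) (finite_subsets_at_top UNIV)"
  proof -
    have "(sum (\<lambda>i. l2inner v (c i) * l2inner (c i) v) \<longlongrightarrow> l2inner v v) (finite_subsets_at_top UNIV)"
      using onb_parseval[OF c v v] by (simp add: has_sum_def)
    then have "((\<lambda>F. l2inner v v - sum (\<lambda>i. l2inner v (c i) * l2inner (c i) v) F)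
        \<longlongrightarrow> l2inner v v - l2inner v v) (finite_subsets_at_top UNIV)"
      by (intro tendsto_diff tendsto_const)
    then show ?thesis
      by (simp add: e_def[abs_def])
  qed
  then have "((\<lambda>F. C * sqrt (cmod (e F)) * l2norm w) \<longlongrightarrow> 0) (finite_subsets_at_top UNIV)"
    by (auto intro!: tendsto_eq_intros)
  then have "((\<lambda>F. (\<Sum>i\<in>F. l2inner v (c i) * l2inner (X (c i)) w) - l2inner (X v) w) \<longlongrightarrow> 0)
      (finite_subsets_at_top UNIV)"
    by (rule Lim_null_comparison[rotated]) (auto intro: eventually_finite_subsets_at_top_weakI bound)
  then show ?thesis
    unfolding has_sum_def by (rule LIM_zero_cancel)
qed


section \<open>Traces with respect to orthonormal bases\<close>

definition basis_trace ::
    "('i \<Rightarrow> ('i \<Rightarrow> complex)) \<Rightarrow> (('i \<Rightarrow> complex) \<Rightarrow> ('i \<Rightarrow> complex)) \<Rightarrow> complex" where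
  "basis_trace c X = (\<Sum>\<^sub>\<infinity>i. l2inner (X (c i)) (c i))"

definition diag_bounded :: "(('i \<Rightarrow> complex) \<Rightarrow> ('i \<Rightarrow> complex)) \<Rightarrow> bool" where
  "diag_bounded X \<longleftrightarrow>
     (\<exists>C. \<forall>n e. orthonormal_fam n e \<longrightarrow> (\<Sum>k<n. cmod (l2inner (X (e k)) (e k))) \<le> C)"

lemma trace_eq_basis_trace_delta: "trace X = basis_trace delta X"
  unfolding trace_def basis_trace_def by (simp add: l2inner_delta_right)

lemma trace_class_diag_bounded: "trace_class X \<Longrightarrow> diag_bounded X"
  unfolding trace_class_def diag_bounded_def by blast

lemma onb_enumerate:
  assumes c: "onb c" and F: "finite F"
  obtains h where "bij_betw h {..<card F} F" "orthonormal_fam (card F) (\<lambda>k. c (h k))"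
proof -
  obtain h where h: "bij_betw h {..<card F} F"
    using ex_bij_betw_nat_finite[OF F] by (auto simp: atLeast0LessThan)
  then have "h k = h l \<longleftrightarrow> k = l" if "k < card F" "l < card F" for k l
    using that unfolding bij_betw_def inj_on_def by auto
  then have "orthonormal_fam (card F) (\<lambda>k. c (h k))"
    using c by (simp add: orthonormal_fam_def onb_l2 onb_orthonormal)
  with h that show ?thesis
    by blast
qed

lemma onb_diag_abs_summable:
  assumes c: "onb c" and X: "diag_bounded X"
  shows "(\<lambda>i. norm (l2inner (X (c i)) (c i))) summable_on UNIV"
proof -
  obtain C where C: "\<forall>n e. orthonormal_fam n e \<longrightarrow> (\<Sum>k<n. cmod (l2inner (X (e k)) (e k))) \<le> C"
    using X by (auto simp: diag_bounded_def)
  have "(\<Sum>i\<in>F. norm (l2inner (X (c i)) (c i))) \<le> C" if F: "finite F" for F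
  proof -
    obtain h where h: "bij_betw h {..<card F} F" "orthonormal_fam (card F) (\<lambda>k. c (h k))"
      using onb_enumerate[OF c F] .
    have "(\<Sum>i\<in>F. norm (l2inner (X (c i)) (c i))) = (\<Sum>k<card F. cmod (l2inner (X (c (h k))) (c (h k))))"
      using sum.reindex_bij_betw[OF h(1), of "\<lambda>i. norm (l2inner (X (c i)) (c i))"] by simp
    also have "\<dots> \<le> C"
      using C h(2) by blast
    finally show ?thesis .
  qed
  then show ?thesis
    unfolding abs_summable_iff_bdd_above by (auto intro!: bdd_aboveI[where M = C])
qed

lemma onb_diag_summable:
  "onb c \<Longrightarrow> diag_bounded X \<Longrightarrow> (\<lambda>i. l2inner (X (c i)) (c i)) summable_on UNIV"
  by (rule abs_summable_summable, rule onb_diag_abs_summable)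


lemma unimodular_mult_cnj: "cmod z = 1 \<Longrightarrow> z * cnj z = 1"
  using complex_norm_square[of z] by simp

lemma onb_rotate_phase:
  assumes c: "onb c" and \<theta>: "cmod \<theta> = 1"
  shows "onb (c(j := (\<lambda>t. \<theta> * c j t)))"
  unfolding onb_def
proof (intro conjI allI ballI)
  let ?c = "c(j := (\<lambda>t. \<theta> * c j t))"
  have \<theta>': "\<theta> * cnj \<theta> = 1" "cnj \<theta> * \<theta> = 1"
    using unimodular_mult_cnj[OF \<theta>] by (simp_all add: mult.commute)
  show "?c i \<in> l2" for i
    using c by (simp add: onb_l2 l2_scale)
  show "l2inner (?c i) (?c k) = (if i = k then 1 else 0)" for i k
    using onb_orthonormal[OF c] \<theta>' by (auto simp: l2inner_scale_left l2inner_scale_right)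
  show "((\<lambda>i. l2inner u (?c i) * l2inner (?c i) w) has_sum l2inner u w) UNIV"
    if "u \<in> l2" "w \<in> l2" for u w
  proof -
    have "l2inner u (?c i) * l2inner (?c i) w = l2inner u (c i) * l2inner (c i) w" for i
      using \<theta>' by (simp add: l2inner_scale_left l2inner_scale_right algebra_simps)
    then show ?thesis
      using onb_parseval[OF c that] by simp
  qed
qed

lemma basis_trace_rotate_phase:
  assumes c: "onb c" and \<theta>: "cmod \<theta> = 1" and X: "bounded_op X"
  shows "basis_trace (c(j := (\<lambda>t. \<theta> * c j t))) X = basis_trace c X"
proof -
  let ?c = "c(j := (\<lambda>t. \<theta> * c j t))"
  have "l2inner (X (?c i)) (?c i) = l2inner (X (c i)) (c i)" for i
  proof (cases "i = j")
    case True
    have "l2inner (X (\<lambda>t. \<theta> * c j t)) (\<lambda>t. \<theta> * c j t) = (\<theta> * cnj \<theta>) * l2inner (X (c j)) (c j)"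
      using bounded_op_scale[OF X onb_l2[OF c]]
      by (simp add: l2inner_scale_left l2inner_scale_right mult.assoc)
    with True show ?thesis
      using unimodular_mult_cnj[OF \<theta>] by simp
  qed simp
  then show ?thesis
    unfolding basis_trace_def by simp
qed

definition reflection :: "('i \<Rightarrow> complex) \<Rightarrow> ('i \<Rightarrow> complex) \<Rightarrow> ('i \<Rightarrow> complex)" where
  "reflection d u = (\<lambda>t. u t - (2 / l2inner d d * l2inner u d) * d t)"

lemma reflection_l2: "d \<in> l2 \<Longrightarrow> u \<in> l2 \<Longrightarrow> reflection d u \<in> l2"
  unfolding reflection_def by (intro l2_diff l2_scale)

lemma reflection_orthogonal: "l2inner u d = 0 \<Longrightarrow> reflection d u = u"
  by (simp add: reflection_def)

lemma l2inner_diff_scale: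
  assumes "u \<in> l2" "w \<in> l2" "d \<in> l2" "e \<in> l2"
  shows "l2inner (\<lambda>t. u t - p * d t) (\<lambda>t. w t - q * e t)
       = l2inner u w - cnj q * l2inner u e - p * l2inner d w + p * cnj q * l2inner d e"
  using assms
  by (simp add: l2inner_diff_left l2inner_diff_right l2inner_scale_left l2inner_scale_right
      l2_diff l2_scale algebra_simps)

lemma l2inner_op_diff_scale:
  assumes X: "bounded_op X" and u: "u \<in> l2" and d: "d \<in> l2"
  shows "l2inner (X (\<lambda>t. u t - p * d t)) (\<lambda>t. u t - p * d t)
    = l2inner (X u) u - cnj p * l2inner (X u) d - p * l2inner (X d) u + p * cnj p * l2inner (X d) d"
proof -
  have "X (\<lambda>t. u t - p * d t) = (\<lambda>t. X u t - X (\<lambda>t. p * d t) t)"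
    by (rule bounded_op_diff[OF X u l2_scale[OF d]])
  also have "X (\<lambda>t. p * d t) = (\<lambda>t. p * X d t)"
    by (rule bounded_op_scale[OF X d])
  finally show ?thesis
    using X u d by (simp add: l2inner_diff_scale bounded_op_l2)
qed

lemma l2inner_reflection:
  assumes d: "d \<in> l2" "l2inner d d \<noteq> 0" and u: "u \<in> l2" and w: "w \<in> l2"
  shows "l2inner (reflection d u) (reflection d w) = l2inner u w"
proof -
  define \<kappa> where "\<kappa> = 2 / l2inner d d"
  have \<kappa>: "\<kappa> * l2inner d d = 2" "cnj \<kappa> = \<kappa>"
    using d by (simp_all add: \<kappa>_def)
  have "l2inner (reflection d u) (reflection d w) = l2inner u w - cnj (\<kappa> * l2inner w d) * l2inner u d
      - \<kappa> * l2inner u d * l2inner d w + \<kappa> * l2inner u d * cnj (\<kappa> * l2inner w d) * l2inner d d"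
    unfolding reflection_def \<kappa>_def[symmetric] by (rule l2inner_diff_scale[OF u w d(1) d(1)])
  also have "\<dots> = l2inner u w + (\<kappa> * l2inner d d - 2) * \<kappa> * (l2inner u d * l2inner d w)"
    using \<kappa>(2) by (simp add: algebra_simps)
  finally show ?thesis
    by (simp add: \<kappa>(1))
qed

lemma l2inner_reflection_swap:
  assumes "d \<in> l2" "u \<in> l2" "w \<in> l2"
  shows "l2inner u (reflection d w) = l2inner (reflection d u) w"
proof -
  define \<kappa> where "\<kappa> = 2 / l2inner d d"
  have "cnj \<kappa> = \<kappa>"
    by (simp add: \<kappa>_def)
  then show ?thesis
    unfolding reflection_def \<kappa>_def[symmetric] using assms
    by (simp add: l2inner_diff_left l2inner_diff_right l2inner_scale_left l2inner_scale_right
        l2_scale)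
qed

lemma onb_reflection:
  assumes c: "onb c" and d: "d \<in> l2" "l2inner d d \<noteq> 0"
  shows "onb (\<lambda>i. reflection d (c i))"
  unfolding onb_def
proof (intro conjI allI ballI)
  show "reflection d (c i) \<in> l2" for i
    using d(1) onb_l2[OF c] by (rule reflection_l2)
  show "l2inner (reflection d (c i)) (reflection d (c k)) = (if i = k then 1 else 0)" for i k
    using l2inner_reflection[OF d onb_l2[OF c] onb_l2[OF c]] onb_orthonormal[OF c] by simp
  show "((\<lambda>i. l2inner u (reflection d (c i)) * l2inner (reflection d (c i)) w) has_sum l2inner u w) UNIV"
    if u: "u \<in> l2" and w: "w \<in> l2" for u w
  proof -
    have "l2inner u (reflection d (c i)) * l2inner (reflection d (c i)) w
        = l2inner (reflection d u) (c i) * l2inner (c i) (reflection d w)" for i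
      using l2inner_reflection_swap[OF d(1) u onb_l2[OF c]]
        l2inner_reflection_swap[OF d(1) onb_l2[OF c] w] by simp
    moreover have "((\<lambda>i. l2inner (reflection d u) (c i) * l2inner (c i) (reflection d w)) has_sum
        l2inner (reflection d u) (reflection d w)) UNIV"
      using d u w by (intro onb_parseval[OF c] reflection_l2)
    ultimately show ?thesis
      using l2inner_reflection[OF d u w] by simp
  qed
qed

text \<open>A reflection changes a basis by a rank-one perturbation, whose contribution to the
  diagonal sum is computed by Parseval's identity.\<close>

lemma basis_trace_reflection:
  assumes c: "onb c" and X: "bounded_op X" "diag_bounded X" and d: "d \<in> l2" "l2inner d d \<noteq> 0"
  shows "basis_trace (\<lambda>i. reflection d (c i)) X = basis_trace c X"
proof -
  define \<kappa> where "\<kappa> = 2 / l2inner d d"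
  have \<kappa>: "\<kappa> * l2inner d d = 2" "cnj \<kappa> = \<kappa>"
    using d by (simp_all add: \<kappa>_def)
  have Xd: "X d \<in> l2"
    using X(1) d(1) by (rule bounded_op_l2)
  have "l2inner (X (reflection d (c i))) (reflection d (c i))
      = l2inner (X (c i)) (c i) + (- \<kappa>) * (l2inner d (c i) * l2inner (X (c i)) d)
        + (- \<kappa>) * (l2inner (X d) (c i) * l2inner (c i) d)
        + (\<kappa> * \<kappa> * l2inner (X d) d) * (l2inner d (c i) * l2inner (c i) d)" for i
    unfolding reflection_def \<kappa>_def[symmetric] l2inner_op_diff_scale[OF X(1) onb_l2[OF c] d(1)]
    using \<kappa>(2) by (simp add: algebra_simps)
  then have "((\<lambda>i. l2inner (X (reflection d (c i))) (reflection d (c i)))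
      has_sum (basis_trace c X + (- \<kappa>) * l2inner (X d) d + (- \<kappa>) * l2inner (X d) d
        + (\<kappa> * \<kappa> * l2inner (X d) d) * l2inner d d)) UNIV"
    unfolding basis_trace_def
    by (simp only:) (intro has_sum_add has_sum_cmult_right has_sum_infsum onb_diag_summable
        onb_expansion[OF c X(1) d(1) d(1)] onb_parseval[OF c Xd d(1)] onb_parseval[OF c d(1) d(1)] c X(2))
  also have "basis_trace c X + (- \<kappa>) * l2inner (X d) d + (- \<kappa>) * l2inner (X d) d
      + (\<kappa> * \<kappa> * l2inner (X d) d) * l2inner d d = basis_trace c X"
    using \<kappa>(1) by (simp add: algebra_simps)
  finally have "((\<lambda>i. l2inner (X (reflection d (c i))) (reflection d (c i))) has_sum basis_trace c X) UNIV" .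
  then show ?thesis
    unfolding basis_trace_def[of "\<lambda>i. reflection d (c i)"] by (rule infsumI)
qed


lemma onb_nonorthogonal:
  assumes c: "onb c" and y: "y \<in> l2" "l2inner y y = 1"
  obtains j where "l2inner (c j) y \<noteq> 0"
proof -
  have "((\<lambda>i. l2inner y (c i) * l2inner (c i) y) has_sum 1) UNIV"
    using onb_parseval[OF c y(1) y(1)] y(2) by simp
  then have "\<not> (\<forall>j. l2inner (c j) y = 0)"
    using has_sum_0 has_sum_unique by fastforce
  with that show ?thesis
    by blast
qed

lemma l2inner_diff_self_neq_0:
  assumes "x \<in> l2" "y \<in> l2" "x \<noteq> y"
  shows "l2inner (\<lambda>t. x t - y t) (\<lambda>t. x t - y t) \<noteq> 0"
proof
  assume "l2inner (\<lambda>t. x t - y t) (\<lambda>t. x t - y t) = 0"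
  then have "(\<lambda>t. x t - y t) = (\<lambda>t. 0)"
    using assms by (intro l2inner_self_eq_0 l2_diff)
  with assms(3) show False
    by (simp add: fun_eq_iff)
qed

lemma reflection_unit_vectors:
  assumes x: "x \<in> l2" "l2inner x x = 1" and y: "y \<in> l2" "l2inner y y = 1"
    and xy: "l2inner x y = l2inner y x" and "x \<noteq> y"
  shows "reflection (\<lambda>t. x t - y t) x = y"
proof -
  let ?d = "\<lambda>t. x t - y t"
  have "l2inner ?d ?d = 2 * l2inner x ?d"
    using x y xy by (simp add: l2inner_diff_left l2inner_diff_right l2_diff algebra_simps)
  moreover have "l2inner ?d ?d \<noteq> 0"
    by (rule l2inner_diff_self_neq_0[OF x(1) y(1) \<open>x \<noteq> y\<close>])
  ultimately have "2 / l2inner ?d ?d * l2inner x ?d = 1"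
    by simp
  then show ?thesis
    unfolding reflection_def by simp
qed

lemma onb_rotate_phase_real:
  assumes c: "onb c" and X: "bounded_op X" and nz: "l2inner (c j) y \<noteq> 0"
  obtains x where "onb (c(j := x))" "basis_trace (c(j := x)) X = basis_trace c X"
    "l2inner x y = l2inner y x"
proof -
  define z where "z = l2inner (c j) y"
  define \<theta> where "\<theta> = cnj z / cmod z"
  have z: "z \<noteq> 0"
    using nz by (simp add: z_def)
  have \<theta>: "cmod \<theta> = 1"
    using z by (simp add: \<theta>_def norm_divide)
  have "l2inner (\<lambda>t. \<theta> * c j t) y = \<theta> * z"
    by (simp add: z_def l2inner_scale_left)
  also have "\<dots> = of_real (cmod z)"
    using z by (simp add: \<theta>_def complex_norm_square[symmetric] power2_eq_square mult.commute)
  finally have "l2inner (\<lambda>t. \<theta> * c j t) y = l2inner y (\<lambda>t. \<theta> * c j t)"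
    by (metis l2inner_cnj complex_cnj_complex_of_real)
  with that show ?thesis
    using onb_rotate_phase[OF c \<theta>] basis_trace_rotate_phase[OF c \<theta> X] by blast
qed

text \<open>A phase change makes \<open>\<langle>c j, y\<rangle>\<close> real for some \<open>j\<close> with \<open>\<langle>c j, y\<rangle> \<noteq> 0\<close>; the
  reflection in the difference of the rotated \<open>c j\<close> and \<open>y\<close> then swaps them and fixes every
  \<open>c l\<close> orthogonal to both.\<close>

lemma onb_exchange:
  assumes c: "onb c" and X: "bounded_op X" "diag_bounded X"
    and y: "y \<in> l2" "l2inner y y = 1" and orth: "\<forall>l\<in>L. l2inner (c l) y = 0"
  obtains c' j where "onb c'" "j \<notin> L" "c' j = y" "\<forall>l\<in>L. c' l = c l"
    "basis_trace c' X = basis_trace c X"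
proof -
  obtain j where nz: "l2inner (c j) y \<noteq> 0"
    using onb_nonorthogonal[OF c y] .
  with orth have j: "j \<notin> L"
    by blast
  obtain x where c1: "onb (c(j := x))" and tr1: "basis_trace (c(j := x)) X = basis_trace c X"
    and xy: "l2inner x y = l2inner y x"
    using onb_rotate_phase_real[OF c X(1) nz] .
  have x: "x \<in> l2" "l2inner x x = 1"
    using onb_l2[OF c1, of j] onb_orthonormal[OF c1, of j j] by simp_all
  have c1L: "\<forall>l\<in>L. (c(j := x)) l = c l"
    using j by auto
  have orth_x: "\<forall>l\<in>L. l2inner (c l) x = 0"
  proof
    fix l
    assume "l \<in> L"
    with j have "l \<noteq> j"
      by blast
    then show "l2inner (c l) x = 0"
      using onb_orthonormal[OF c1, of l j] by simp
  qed
  show ?thesis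
  proof (cases "x = y")
    case True
    with that[OF c1 j] c1L tr1 show ?thesis
      by simp
  next
    case False
    let ?d = "\<lambda>t. x t - y t"
    have d: "?d \<in> l2" "l2inner ?d ?d \<noteq> 0"
      using x(1) y(1) False by (simp_all add: l2_diff l2inner_diff_self_neq_0)
    let ?c2 = "\<lambda>i. reflection ?d ((c(j := x)) i)"
    have "?c2 j = y"
      using reflection_unit_vectors[OF x y xy False] by simp
    moreover have "\<forall>l\<in>L. ?c2 l = c l"
      using c1L orth orth_x x(1) y(1) onb_l2[OF c]
      by (simp add: reflection_orthogonal l2inner_diff_right)
    ultimately show ?thesis
      using that[OF onb_reflection[OF c1 d] j] basis_trace_reflection[OF c1 X d] tr1 by simp
  qed
qed

lemma onb_containing_family:
  assumes b: "onb b" and X: "bounded_op X" "diag_bounded X" and g: "orthonormal_fam n g"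
  obtains c J where "onb c" "inj_on J {..<n}" "\<forall>l<n. c (J l) = g l"
    "basis_trace c X = basis_trace b X"
proof -
  have "\<exists>c J. onb c \<and> inj_on J {..<k} \<and> (\<forall>l<k. c (J l) = g l) \<and> basis_trace c X = basis_trace b X"
    if "k \<le> n" for k
    using that
  proof (induction k)
    case 0
    show ?case
      using b by auto
  next
    case (Suc k)
    then obtain c J where c: "onb c" and J: "inj_on J {..<k}" and cJ: "\<forall>l<k. c (J l) = g l"
      and tr: "basis_trace c X = basis_trace b X"
      by auto
    have k: "k < n"
      using Suc.prems by simp
    have gk: "g k \<in> l2" "l2inner (g k) (g k) = 1" and orth: "\<forall>l\<in>J ` {..<k}. l2inner (c l) (g k) = 0"
      using g k cJ by (auto simp: orthonormal_fam_def)
    obtain c' j where c': "onb c'" and j: "j \<notin> J ` {..<k}" and c'j: "c' j = g k"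
      and c'L: "\<forall>l\<in>J ` {..<k}. c' l = c l" and tr': "basis_trace c' X = basis_trace c X"
      using onb_exchange[OF c X gk orth] .
    have "inj_on (J(k := j)) {..<Suc k}"
      using J j by (auto simp: lessThan_Suc inj_on_def)
    moreover have "\<forall>l<Suc k. c' ((J(k := j)) l) = g l"
      using c'j c'L cJ by (auto simp: less_Suc_eq)
    ultimately show ?case
      using c' tr' tr by (intro exI[of _ c'] exI[of _ "J(k := j)"] conjI) (assumption | simp)+
  qed
  with that show ?thesis
    by blast
qed

definition diag_small_beyond ::
    "(('i \<Rightarrow> complex) \<Rightarrow> ('i \<Rightarrow> complex)) \<Rightarrow> nat \<Rightarrow> (nat \<Rightarrow> ('i \<Rightarrow> complex)) \<Rightarrow> real \<Rightarrow> bool" where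
  "diag_small_beyond X n g \<epsilon> \<longleftrightarrow> (\<forall>m f. orthonormal_fam m f \<longrightarrow> (\<forall>k<m. \<forall>l<n. l2inner (f k) (g l) = 0) \<longrightarrow>
     (\<Sum>k<m. cmod (l2inner (X (f k)) (f k))) \<le> \<epsilon>)"

lemma onb_diag_sum_off_family:
  assumes c: "onb c" and X: "diag_bounded X" and cJ: "\<forall>l<n. c (J l) = g l"
    and tail: "diag_small_beyond X n g \<epsilon>"
  shows "cmod (\<Sum>\<^sub>\<infinity>i\<in>-(J ` {..<n}). l2inner (X (c i)) (c i)) \<le> \<epsilon>"
proof -
  let ?f = "\<lambda>i. l2inner (X (c i)) (c i)"
  have abs: "(\<lambda>i. norm (?f i)) summable_on -(J ` {..<n})"
    using onb_diag_abs_summable[OF c X] by (rule summable_on_subset_banach) simp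
  have "(\<Sum>i\<in>F. norm (?f i)) \<le> \<epsilon>" if F: "finite F" "F \<subseteq> -(J ` {..<n})" for F
  proof -
    obtain h where h: "bij_betw h {..<card F} F" "orthonormal_fam (card F) (\<lambda>k. c (h k))"
      using onb_enumerate[OF c F(1)] .
    have "h k \<noteq> J l" if "k < card F" "l < n" for k l
      using bij_betwE[OF h(1)] F(2) that by auto
    then have "\<forall>k<card F. \<forall>l<n. l2inner (c (h k)) (g l) = 0"
      using cJ onb_orthonormal[OF c] by metis
    then have "(\<Sum>k<card F. cmod (?f (h k))) \<le> \<epsilon>"
      using tail h(2) by (simp add: diag_small_beyond_def)
    then show ?thesis
      using sum.reindex_bij_betw[OF h(1), of "\<lambda>i. norm (?f i)"] by simp
  qed
  then have "(\<Sum>\<^sub>\<infinity>i\<in>-(J ` {..<n}). norm (?f i)) \<le> \<epsilon>"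
    by (intro infsum_le_finite_sums abs)
  with norm_infsum_bound[OF abs] show ?thesis
    by linarith
qed

lemma basis_trace_approx:
  assumes b: "onb b" and X: "bounded_op X" "diag_bounded X" and g: "orthonormal_fam n g"
    and tail: "diag_small_beyond X n g \<epsilon>"
  shows "cmod (basis_trace b X - (\<Sum>l<n. l2inner (X (g l)) (g l))) \<le> \<epsilon>"
proof -
  obtain c J where c: "onb c" and J: "inj_on J {..<n}" and cJ: "\<forall>l<n. c (J l) = g l"
    and tr: "basis_trace c X = basis_trace b X"
    using onb_containing_family[OF b X g] .
  define f where "f i = l2inner (X (c i)) (c i)" for i
  define G where "G = J ` {..<n}"
  have "f summable_on UNIV"
    unfolding f_def using c X(2) by (rule onb_diag_summable)
  then have "f summable_on G" "f summable_on -G"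
    by (auto intro: summable_on_subset_banach)
  then have "basis_trace c X = infsum f G + infsum f (-G)"
    unfolding basis_trace_def f_def[symmetric] using infsum_Un_disjoint by fastforce
  moreover have "infsum f G = (\<Sum>l<n. l2inner (X (g l)) (g l))"
    unfolding G_def using J cJ by (simp add: sum.reindex f_def)
  moreover have "cmod (infsum f (-G)) \<le> \<epsilon>"
    unfolding f_def G_def using c X(2) cJ tail by (rule onb_diag_sum_off_family)
  ultimately show ?thesis
    using tr by simp
qed

lemma orthonormal_fam_append:
  assumes g: "orthonormal_fam n g" and f: "orthonormal_fam m f"
    and cross: "\<forall>k<m. \<forall>l<n. l2inner (f k) (g l) = 0"
  shows "orthonormal_fam (n + m) (\<lambda>k. if k < n then g k else f (k - n))"
proof -
  have "l2inner (g l) (f k) = 0" if "k < m" "l < n" for k l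
    using cross that l2inner_cnj[of "f k" "g l"] by simp
  then show ?thesis
    using f g cross by (auto simp: orthonormal_fam_def)
qed

lemma sum_lessThan_append:
  fixes n m :: nat
  shows "(\<Sum>k<n + m. \<phi> (if k < n then g k else f (k - n))) = (\<Sum>k<n. \<phi> (g k)) + (\<Sum>k<m. \<phi> (f k))"
  by (induction m) (simp_all add: algebra_simps)

text \<open>Take \<open>g\<close> whose diagonal sum is within \<open>\<epsilon>\<close> of the supremum: appending a family orthogonal
  to \<open>g\<close> must stay below the supremum.\<close>

lemma diag_bounded_small_beyond:
  assumes X: "diag_bounded X" and \<epsilon>: "\<epsilon> > 0"
  obtains n g where "orthonormal_fam n g" "diag_small_beyond X n g \<epsilon>"
proof -
  define V where "V = {\<Sum>k<n. cmod (l2inner (X (e k)) (e k)) | n e. orthonormal_fam n e}"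
  obtain C where "\<forall>n e. orthonormal_fam n e \<longrightarrow> (\<Sum>k<n. cmod (l2inner (X (e k)) (e k))) \<le> C"
    using X by (auto simp: diag_bounded_def)
  then have bdd: "bdd_above V"
    unfolding V_def by (auto intro!: bdd_aboveI[where M = C])
  have "0 \<in> V"
    unfolding V_def by (auto intro!: exI[of _ 0] simp: orthonormal_fam_def)
  then obtain s where "s \<in> V" "Sup V - \<epsilon> < s"
    using less_cSup_iff[OF _ bdd, of "Sup V - \<epsilon>"] \<epsilon> by auto
  then obtain n g where g: "orthonormal_fam n g" and s: "Sup V - \<epsilon> < (\<Sum>k<n. cmod (l2inner (X (g k)) (g k)))"
    unfolding V_def by blast
  have "(\<Sum>k<m. cmod (l2inner (X (f k)) (f k))) \<le> \<epsilon>"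
    if "orthonormal_fam m f" "\<forall>k<m. \<forall>l<n. l2inner (f k) (g l) = 0" for m f
  proof -
    let ?e = "\<lambda>k. if k < n then g k else f (k - n)"
    have "orthonormal_fam (n + m) ?e"
      using that by (rule orthonormal_fam_append[OF g])
    then have "(\<Sum>k<n + m. cmod (l2inner (X (?e k)) (?e k))) \<in> V"
      unfolding V_def by (intro CollectI exI[of _ "n + m"] exI[of _ ?e] conjI) simp_all
    then have "(\<Sum>k<n + m. cmod (l2inner (X (?e k)) (?e k))) \<le> Sup V"
      using bdd by (rule cSup_upper)
    then have "(\<Sum>k<n. cmod (l2inner (X (g k)) (g k))) + (\<Sum>k<m. cmod (l2inner (X (f k)) (f k))) \<le> Sup V"
      by (simp only: sum_lessThan_append[where \<phi> = "\<lambda>v. cmod (l2inner (X v) v)"])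
    with s show ?thesis
      by linarith
  qed
  with g that show ?thesis
    by (simp add: diag_small_beyond_def)
qed

lemma basis_trace_independent:
  assumes b: "onb b" and c: "onb c" and X: "bounded_op X" "diag_bounded X"
  shows "basis_trace b X = basis_trace c X"
proof -
  have "cmod (basis_trace b X - basis_trace c X) \<le> 0 + \<epsilon>" if "\<epsilon> > 0" for \<epsilon>
  proof -
    have "\<epsilon> / 2 > 0"
      using that by simp
    then obtain n g where g: "orthonormal_fam n g" and tail: "diag_small_beyond X n g (\<epsilon> / 2)"
      by (rule diag_bounded_small_beyond[OF X(2)])
    let ?s = "\<Sum>l<n. l2inner (X (g l)) (g l)"
    have "cmod (basis_trace b X - ?s) \<le> \<epsilon> / 2" "cmod (basis_trace c X - ?s) \<le> \<epsilon> / 2"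
      using basis_trace_approx[OF b X g tail] basis_trace_approx[OF c X g tail] by auto
    then show ?thesis
      using dist_triangle2[of "basis_trace b X" "basis_trace c X" ?s] by (simp add: dist_norm)
  qed
  then have "cmod (basis_trace b X - basis_trace c X) \<le> 0"
    by (rule field_le_epsilon)
  then show ?thesis
    by simp
qed

lemma trace_unitary_conj:
  assumes V: "unitary_op V" and W: "unitary_op W" and WV: "\<forall>f\<in>l2. W (V f) = f"
    and X: "bounded_op X" "diag_bounded X"
  shows "trace (\<lambda>f. V (X (W f))) = trace X"
proof -
  have "V (X (W (delta i))) i = l2inner (X (W (delta i))) (W (delta i))" for i
  proof -
    have Wd: "W (delta i) \<in> l2"
      using W delta_l2 by (rule unitary_op_l2)
    have XW: "X (W (delta i)) \<in> l2"
      using X(1) Wd by (rule bounded_op_l2)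
    have "V (X (W (delta i))) i = l2inner (V (X (W (delta i)))) (delta i)"
      by (simp add: l2inner_delta_right)
    also have "\<dots> = l2inner (W (V (X (W (delta i))))) (W (delta i))"
      using unitary_op_inner[OF W unitary_op_l2[OF V XW] delta_l2] by simp
    also have "\<dots> = l2inner (X (W (delta i))) (W (delta i))"
      using WV XW by simp
    finally show ?thesis .
  qed
  then have "trace (\<lambda>f. V (X (W f))) = basis_trace (\<lambda>i. W (delta i)) X"
    unfolding trace_def basis_trace_def by simp
  also have "\<dots> = basis_trace delta X"
    using onb_unitary_image[OF W onb_delta] onb_delta X by (rule basis_trace_independent)
  finally show ?thesis
    by (simp add: trace_eq_basis_trace_delta)
qed

lemma trace_class_comp_unitary:
  assumes A: "trace_class A" and W: "unitary_op W"
  shows "trace_class (\<lambda>f. A (W f))"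
proof -
  obtain C where C: "\<forall>n e f. orthonormal_fam n e \<longrightarrow> orthonormal_fam n f \<longrightarrow>
      (\<Sum>k<n. cmod (l2inner (A (e k)) (f k))) \<le> C"
    using A by (auto simp: trace_class_def)
  have W_fam: "orthonormal_fam n (\<lambda>k. W (e k))" if "orthonormal_fam n e" for n e
    using that unitary_op_l2[OF W] unitary_op_inner[OF W] by (simp add: orthonormal_fam_def)
  have "\<forall>n e f. orthonormal_fam n e \<longrightarrow> orthonormal_fam n f \<longrightarrow>
      (\<Sum>k<n. cmod (l2inner (A (W (e k))) (f k))) \<le> C"
    using C[rule_format, OF W_fam] by simp
  moreover have "bounded_op (\<lambda>f. A (W f))"
    using A W by (simp add: bounded_op_comp trace_class_def unitary_op_def)
  ultimately show ?thesis
    unfolding trace_class_def by blast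
qed


section \<open>The multiplier and the representation\<close>

lemma bicharacter_neg_left:
  assumes "multiplier m" "bicharacter m"
  shows "m (- x) y = cnj (m x y)"
proof -
  have "m x y * m (- x) y = 1"
    using assms by (metis bicharacter_def multiplier_def add.right_inverse)
  moreover have "cnj (m x y) * m x y = 1"
    using unimodular_mult_cnj[of "m x y"] assms(1) by (simp add: multiplier_def mult.commute)
  ultimately show ?thesis
    by (metis mult.assoc mult_1_left mult_1_right)
qed

lemma bicharacter_neg_right:
  assumes "multiplier m" "bicharacter m"
  shows "m x (- y) = cnj (m x y)"
proof -
  have "m x y * m x (- y) = 1"
    using assms by (metis bicharacter_def multiplier_def add.right_inverse)
  moreover have "cnj (m x y) * m x y = 1"
    using unimodular_mult_cnj[of "m x y"] assms(1) by (simp add: multiplier_def mult.commute)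
  ultimately show ?thesis
    by (metis mult.assoc mult_1_left mult_1_right)
qed

lemma half_add: "two_regular TYPE('x::topological_ab_group_add) \<Longrightarrow> half (x::'x) + half x = x"
  unfolding two_regular_def half_def by (metis bij_is_surj surj_f_inv_f)

text \<open>\<open>m(b, b)\<close> is real and unimodular, so \<open>m(x, x) = m(b, b)\<^sup>4 = 1\<close> for \<open>b = x/2\<close>.\<close>

lemma bicharacter_diag:
  assumes "multiplier m" "bicharacter m" "\<forall>x y. m x y = cnj (m y x)"
    and "two_regular TYPE('x::topological_ab_group_add)"
  shows "m (x::'x) x = 1"
proof -
  define b where "b = half x"
  have "m b b * cnj (m b b) = 1"
    using assms(1) unimodular_mult_cnj by (simp add: multiplier_def)
  moreover have "m b b = cnj (m b b)"
    using assms(3) by blast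
  ultimately have "m b b * m b b = 1"
    by metis
  moreover have "m (b + b) (b + b) = (m b b * m b b) * (m b b * m b b)"
    using assms(2) by (simp add: bicharacter_def algebra_simps)
  ultimately show ?thesis
    using half_add[OF assms(4), of x] by (simp add: b_def)
qed

lemma bicharacter_shift:
  assumes "multiplier m" "bicharacter m" "\<forall>x y. m x y = cnj (m y x)"
    and "two_regular TYPE('x::topological_ab_group_add)"
  shows "m (a::'x) y = m (a + a + y) (- a)"
proof -
  have "m (a + a + y) (- a) = cnj (m a a) * cnj (m a a) * cnj (m y a)"
    using assms(1,2) by (simp add: bicharacter_def bicharacter_neg_right)
  also have "\<dots> = m a y"
    using assms(3)[rule_format, of a y] bicharacter_diag[OF assms] by simp
  finally show ?thesis ..
qed

lemma proj_rep_unitary: "proj_rep m U \<Longrightarrow> unitary_op (U x)"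
  by (simp add: proj_rep_def)

lemma proj_rep_mult: "proj_rep m U \<Longrightarrow> f \<in> l2 \<Longrightarrow> U x (U y f) = (\<lambda>i. m x y * U (x + y) f i)"
  by (simp add: proj_rep_def)

lemma proj_rep_zero:
  assumes m: "multiplier m" and U: "proj_rep m U" and f: "f \<in> l2"
  shows "U 0 f = f"
proof -
  have "U 0 ` l2 = l2"
    using proj_rep_unitary[OF U] by (simp add: unitary_op_def)
  then obtain g where g: "g \<in> l2" and fg: "f = U 0 g"
    using f by blast
  have "U 0 (U 0 g) = (\<lambda>i. m 0 0 * U (0 + 0) g i)"
    by (rule proj_rep_mult[OF U g])
  with m fg show ?thesis
    by (simp add: multiplier_def)
qed

context
  fixes m :: "'x::topological_ab_group_add \<Rightarrow> 'x \<Rightarrow> complex"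
    and U :: "'x \<Rightarrow> ('i \<Rightarrow> complex) \<Rightarrow> ('i \<Rightarrow> complex)"
  assumes multiplier: "multiplier m" and bichar: "bicharacter m"
    and antisym: "\<forall>x y. m x y = cnj (m y x)" and two_reg: "two_regular TYPE('x)"
    and rep: "proj_rep m U"
begin

lemma proj_rep_neg_inverse: "f \<in> l2 \<Longrightarrow> U (- z) (U z f) = f"
  using proj_rep_mult[OF rep, of f "- z" z] proj_rep_zero[OF multiplier rep]
    bicharacter_neg_left[OF multiplier bichar, of z z] bicharacter_diag[OF multiplier bichar antisym two_reg]
  by simp

lemma adj_proj_rep:
  assumes f: "f \<in> l2"
  shows "adj (U z) f = U (- z) f"
proof
  fix i
  have Uf: "U (- z) f \<in> l2"
    using proj_rep_unitary[OF rep] f by (rule unitary_op_l2)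
  have "U (- z) f i = l2inner (U z (U (- z) f)) (U z (delta i))"
    using unitary_op_inner[OF proj_rep_unitary[OF rep] Uf delta_l2] by (simp add: l2inner_delta_right)
  also have "\<dots> = l2inner f (U z (delta i))"
    using proj_rep_neg_inverse[OF f, of "- z"] by simp
  finally show "adj (U z) f i = U (- z) f i"
    by (simp add: adj_def)
qed

lemma proj_rep_shift: "f \<in> l2 \<Longrightarrow> U a (U y f) = U (a + a + y) (U (- a) f)"
  using proj_rep_mult[OF rep, of f a y] proj_rep_mult[OF rep, of f "a + a + y" "- a"]
    bicharacter_shift[OF multiplier bichar antisym two_reg, of a y]
  by (simp add: algebra_simps)

end

theorem lemma6p15:
  fixes m :: "'x::{topological_ab_group_add,t2_space} \<Rightarrow> 'x \<Rightarrow> complex"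
    and U :: "'x \<Rightarrow> ('i \<Rightarrow> complex) \<Rightarrow> ('i \<Rightarrow> complex)"
    and A :: "('i \<Rightarrow> complex) \<Rightarrow> ('i \<Rightarrow> complex)"
    and x \<xi> :: 'x
  assumes "locally_compact_space (euclidean :: 'x topology)"
    and "multiplier m"
    and "heisenberg m"
    and "proj_rep m U"
    and "strongly_continuous U"
    and "irreducible_rep U"
    and "square_integrable U"
    and "two_regular TYPE('x)"
    and "bicharacter m"
    and "\<forall>x y. m x y = cnj (m y x)"
    and "trace_class A"
  shows "FU U (\<lambda>f. U (half x) (A (U (half x) f))) \<xi> = FU U A (\<xi> - x)"
proof -
  note rep_facts = assms(2,9,10,8,4)
  define a where "a = half x"
  have x: "a + a = x"
    unfolding a_def using assms(8) by (rule half_add)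
  have unitary: "unitary_op (U z)" for z
    using assms(4) by (rule proj_rep_unitary)
  have "FU U (\<lambda>f. U (half x) (A (U (half x) f))) \<xi> = trace (\<lambda>f. U a (A (U (x - \<xi>) (U (- a) f))))"
    unfolding FU_def trace_def a_def[symmetric]
    using adj_proj_rep[OF rep_facts delta_l2] proj_rep_shift[OF rep_facts delta_l2, of a] x by simp
  also have "\<dots> = trace (\<lambda>f. A (U (x - \<xi>) f))"
  proof (rule trace_unitary_conj[OF unitary unitary])
    show "\<forall>f\<in>l2. U (- a) (U a f) = f"
      using proj_rep_neg_inverse[OF rep_facts] by blast
    have "trace_class (\<lambda>f. A (U (x - \<xi>) f))"
      using assms(11) unitary by (rule trace_class_comp_unitary)
    then show "bounded_op (\<lambda>f. A (U (x - \<xi>) f))" "diag_bounded (\<lambda>f. A (U (x - \<xi>) f))"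
      by (simp_all add: trace_class_def trace_class_diag_bounded)
  qed
  also have "\<dots> = FU U A (\<xi> - x)"
    unfolding FU_def trace_def using adj_proj_rep[OF rep_facts delta_l2] by simp
  finally show ?thesis .
qed

end
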